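(* Let $G$ be a graph and $uv\in E(G)$. Let $W_1=N(u)\setminus N[v]$, $W_2=N(u)\cap N(v)$, $W_3=N(v)\setminus N[u]$ and $W_4=V(G)\setminus (N[u]\cup N[v])$. Suppose there is no maximal induced matching $M$ of $G$ with $V(M)\subseteq W_1\cup W_4$ and $V(M)\cap W_1\ne\emptyset$, and there is no maximal induced matching $M$ of $G$ with $V(M)\subseteq W_3\cup W_4$ and $V(M)\cap W_3\neq\emptyset$. Then $|M_{G_{T_G(u)\to v}}|\ge |M_G|$ or $|M_{G_{T_G(v)\to u}}|\ge |M_G|$.
   Context: Graphs are finite, simple, undirected. $N(x)$, $N[x]$ are the open and closed neighborhoods. An induced matching is a matching whose endpoints induce a $1$-regular subgraph; it is maximal if not properly contained in another induced matching; $M_G$ is the set of maximal induced matchings of $G$; $V(M)$ is the set of vertices covered by $M$. For a vertex $v$, $T_G(v)=\{w\in V(G): N_G[w]=N_G[v]\}$ (the twin set of $v$). For $uv\in E(G)$, making $v$ into a twin of $u$ means deleting the edge $vx$ for every $x\in N(v)\setminus N[u]$ and adding the edge $vy$ for every $y\in N(u)\setminus N[v]$. $G_{T_G(v)\to u}$ is the graph obtained from $G$ by making each vertex of $T_G(v)$ into a twin of $u$; $G_{T_G(u)\to v}$ is defined symmetrically. *)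

theory Defs
  imports Main
begin

definition graph :: "'a set \<Rightarrow> 'a set set \<Rightarrow> bool" where
  "graph V E \<longleftrightarrow> finite V \<and> (\<forall>e\<in>E. \<exists>x y. e = {x, y} \<and> x \<noteq> y \<and> x \<in> V \<and> y \<in> V)"

definition nbhd :: "'a set set \<Rightarrow> 'a \<Rightarrow> 'a set" where
  "nbhd E x = {y. {x, y} \<in> E}"

definition cnbhd :: "'a set set \<Rightarrow> 'a \<Rightarrow> 'a set" where
  "cnbhd E x = insert x (nbhd E x)"

definition covered :: "'a set set \<Rightarrow> 'a set" where
  "covered M = \<Union>M"

definition induced_matching :: "'a set set \<Rightarrow> 'a set set \<Rightarrow> bool" where
  "induced_matching E M \<longleftrightarrow>
     M \<subseteq> E \<and> (\<forall>e\<in>M. \<forall>f\<in>M. e \<noteq> f \<longrightarrow> e \<inter> f = {}) \<and>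
     (\<forall>x\<in>covered M. card (nbhd E x \<inter> covered M) = 1)"

definition maximal_induced_matching :: "'a set set \<Rightarrow> 'a set set \<Rightarrow> bool" where
  "maximal_induced_matching E M \<longleftrightarrow>
     induced_matching E M \<and> \<not> (\<exists>M'. induced_matching E M' \<and> M \<subset> M')"

definition MIM :: "'a set set \<Rightarrow> 'a set set set" where
  "MIM E = {M. maximal_induced_matching E M}"

definition twins :: "'a set \<Rightarrow> 'a set set \<Rightarrow> 'a \<Rightarrow> 'a set" where
  "twins V E v = {w \<in> V. cnbhd E w = cnbhd E v}"

text \<open>Edge set of the graph obtained from (V,E) by making every vertex w of S into
  a twin of u: delete wx for x in N(w) - N[u], add wy for y in N(u) - N[w]
  (neighbourhoods taken in the original graph).\<close>
definition make_twins :: "'a set set \<Rightarrow> 'a set \<Rightarrow> 'a \<Rightarrow> 'a set set" where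
  "make_twins E S u =
     (E - {{w, x} | w x. w \<in> S \<and> x \<in> nbhd E w - cnbhd E u})
     \<union> {{w, y} | w y. w \<in> S \<and> y \<in> nbhd E u - cnbhd E w}"

end

theory Submission
  imports Defs "HOL-Combinatorics.Transposition"
begin

text \<open>Let X = T(u), Y = T(v) and K = X \<union> Y. Since K is a clique, a maximal induced matching
  either avoids K or contains exactly one edge meeting K; so |M_G| is the number of matchings
  avoiding K plus, for every edge e meeting K, the number of maximal induced matchings through e.
  In F = G_{T(v)\<rightarrow>u} the whole of K is one twin class, so these numbers depend only on the
  outer endpoint r of e (call them \<tau>(r)) or are a common value \<alpha> for the edges inside K.
  Passing from G to F, the matchings avoiding K survive (this uses the hypothesis on the
  v-side), edges at X keep their counts and edges between X and Y can only gain. Comparing with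
  the symmetric picture for G_{T(u)\<rightarrow>v} gives
  (|X| + |Y|) |M_G| \<le> |X| |M_F| + |Y| |M_{G_{T(u)\<rightarrow>v}}|, so one of the two is at least |M_G|.\<close>

section \<open>Induced matchings\<close>

lemma graph_edgeE:
  assumes "graph V F" "e \<in> F"
  obtains x y where "e = {x, y}" "x \<noteq> y" "x \<in> V" "y \<in> V"
  using assms unfolding graph_def by blast

lemma graph_edge_at:
  assumes "graph V F" "e \<in> F" "a \<in> e"
  obtains b where "e = {a, b}" "a \<noteq> b" "b \<in> V"
proof -
  obtain x y where "e = {x, y}" "x \<noteq> y" "x \<in> V" "y \<in> V"
    using graph_edgeE[OF assms(1,2)] .
  with assms(3) that show ?thesis
    by (auto simp: insert_commute)
qed

lemma graph_edge_vertices: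
  assumes "graph V F" "{a, b} \<in> F"
  shows "a \<in> V" "b \<in> V" "a \<noteq> b"
proof -
  obtain x y where "{a, b} = {x, y}" "x \<noteq> y" "x \<in> V" "y \<in> V"
    using graph_edgeE[OF assms] .
  then show "a \<in> V" "b \<in> V" "a \<noteq> b"
    by (auto simp: doubleton_eq_iff)
qed

lemma finite_graph_vertices: "graph V F \<Longrightarrow> finite V"
  unfolding graph_def by simp

lemma finite_graph_edges:
  assumes "graph V F"
  shows "finite F"
proof -
  have "F \<subseteq> Pow V"
    using assms by (auto elim: graph_edgeE)
  then show ?thesis
    using finite_graph_vertices[OF assms] by (simp add: finite_subset)
qed

lemma nbhd_iff: "y \<in> nbhd F x \<longleftrightarrow> {x, y} \<in> F"
  by (simp add: nbhd_def)

lemma cnbhd_iff: "y \<in> cnbhd F x \<longleftrightarrow> y = x \<or> {x, y} \<in> F"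
  by (auto simp: cnbhd_def nbhd_def)

lemma nbhd_irrefl: "graph V F \<Longrightarrow> x \<notin> nbhd F x"
  using graph_edge_vertices(3)[of V F x x] by (auto simp: nbhd_iff)

lemma induced_matchingI:
  assumes "M \<subseteq> F"
    and "\<And>e f. e \<in> M \<Longrightarrow> f \<in> M \<Longrightarrow> e \<noteq> f \<Longrightarrow> e \<inter> f = {}"
    and "\<And>x. x \<in> covered M \<Longrightarrow> card (nbhd F x \<inter> covered M) = 1"
  shows "induced_matching F M"
  unfolding induced_matching_def using assms by simp

lemma induced_matching_edges: "induced_matching F M \<Longrightarrow> M \<subseteq> F"
  unfolding induced_matching_def by simp

lemma induced_matching_disjoint:
  "induced_matching F M \<Longrightarrow> e \<in> M \<Longrightarrow> f \<in> M \<Longrightarrow> e \<noteq> f \<Longrightarrow> e \<inter> f = {}"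
  unfolding induced_matching_def by simp

lemma induced_matching_card:
  "induced_matching F M \<Longrightarrow> x \<in> covered M \<Longrightarrow> card (nbhd F x \<inter> covered M) = 1"
  unfolding induced_matching_def by simp

lemma maximal_induced_matchingI:
  "induced_matching F M \<Longrightarrow> (\<And>M'. induced_matching F M' \<Longrightarrow> M \<subset> M' \<Longrightarrow> False)
    \<Longrightarrow> maximal_induced_matching F M"
  unfolding maximal_induced_matching_def by auto

lemma maximal_induced_matchingD: "maximal_induced_matching F M \<Longrightarrow> induced_matching F M"
  unfolding maximal_induced_matching_def by simp

lemma maximal_induced_matching_maximal:
  "maximal_induced_matching F M \<Longrightarrow> induced_matching F M' \<Longrightarrow> M \<subseteq> M' \<Longrightarrow> M' = M"
  unfolding maximal_induced_matching_def by auto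

lemma covered_subset_vertices:
  assumes "graph V F" "induced_matching F M"
  shows "covered M \<subseteq> V"
  using assms induced_matching_edges unfolding covered_def by (fastforce elim: graph_edgeE)

lemma induced_matching_partner:
  assumes "induced_matching F M" "{a, b} \<in> M" "z \<in> covered M" "{a, z} \<in> F"
  shows "z = b"
proof -
  have "a \<in> covered M" "b \<in> covered M"
    using assms(2) unfolding covered_def by blast+
  then have "card (nbhd F a \<inter> covered M) = 1"
    using induced_matching_card[OF assms(1)] by blast
  then obtain w where w: "nbhd F a \<inter> covered M = {w}"
    by (rule card_1_singletonE)
  have "{a, b} \<in> F"
    using induced_matching_edges[OF assms(1)] assms(2) by blast
  then have "b \<in> nbhd F a \<inter> covered M"
    using \<open>b \<in> covered M\<close> by (simp add: nbhd_iff)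
  moreover have "z \<in> nbhd F a \<inter> covered M"
    using assms(3,4) by (simp add: nbhd_iff)
  ultimately show ?thesis
    by (simp add: w)
qed

lemma induced_matching_subset:
  assumes "graph V F" "induced_matching F M" "M' \<subseteq> M"
  shows "induced_matching F M'"
proof (rule induced_matchingI)
  show "M' \<subseteq> F"
    using assms(2,3) induced_matching_edges by blast
  show "\<And>e f. e \<in> M' \<Longrightarrow> f \<in> M' \<Longrightarrow> e \<noteq> f \<Longrightarrow> e \<inter> f = {}"
    using assms(3) induced_matching_disjoint[OF assms(2)] by blast
  fix x
  assume "x \<in> covered M'"
  then obtain e where e: "e \<in> M'" "x \<in> e"
    unfolding covered_def by blast
  have "e \<in> F"
    using e(1) assms(2,3) induced_matching_edges by blast
  then obtain y where "e = {x, y}"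
    using graph_edge_at[OF assms(1) _ e(2)] by blast
  then have y: "y \<in> nbhd F x \<inter> covered M'"
    using e(1) \<open>e \<in> F\<close> unfolding covered_def by (auto simp: nbhd_iff)
  have "x \<in> covered M"
    using e assms(3) unfolding covered_def by blast
  then have "card (nbhd F x \<inter> covered M) = 1"
    by (rule induced_matching_card[OF assms(2)])
  then obtain w where "nbhd F x \<inter> covered M = {w}"
    by (rule card_1_singletonE)
  moreover note y
  moreover have "covered M' \<subseteq> covered M"
    unfolding covered_def using assms(3) by (rule Union_mono)
  ultimately have "nbhd F x \<inter> covered M' = {w}"
    by auto
  then show "card (nbhd F x \<inter> covered M') = 1"
    by simp
qed

lemma induced_matching_cong:
  assumes "graph V F1" "covered M \<subseteq> W"
    and agree: "\<And>a b. a \<in> W \<Longrightarrow> b \<in> W \<Longrightarrow> {a, b} \<in> F1 \<longleftrightarrow> {a, b} \<in> F2"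
    and "induced_matching F1 M"
  shows "induced_matching F2 M"
proof (rule induced_matchingI)
  show "M \<subseteq> F2"
  proof
    fix e
    assume "e \<in> M"
    then have "e \<in> F1"
      using induced_matching_edges[OF assms(4)] by blast
    then obtain a b where ab: "e = {a, b}"
      using graph_edgeE[OF assms(1)] by metis
    then have "a \<in> W" "b \<in> W"
      using assms(2) \<open>e \<in> M\<close> unfolding covered_def by blast+
    then show "e \<in> F2"
      using agree[of a b] \<open>e \<in> F1\<close> ab by simp
  qed
  show "\<And>e f. e \<in> M \<Longrightarrow> f \<in> M \<Longrightarrow> e \<noteq> f \<Longrightarrow> e \<inter> f = {}"
    using assms(4) by (rule induced_matching_disjoint)
  fix x
  assume x: "x \<in> covered M"
  have "y \<in> nbhd F2 x \<longleftrightarrow> y \<in> nbhd F1 x" if "y \<in> covered M" for y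
    using agree[of x y] assms(2) x that by (auto simp: nbhd_iff)
  then have "nbhd F2 x \<inter> covered M = nbhd F1 x \<inter> covered M"
    by blast
  then show "card (nbhd F2 x \<inter> covered M) = 1"
    using induced_matching_card[OF assms(4) x] by simp
qed

lemma maximal_induced_matching_cong:
  assumes "graph V F1" "graph V F2"
    and agree: "\<And>a b. a \<in> W \<Longrightarrow> b \<in> W \<Longrightarrow> {a, b} \<in> F1 \<longleftrightarrow> {a, b} \<in> F2"
    and confined: "\<And>M'. M \<subseteq> M' \<Longrightarrow> induced_matching F1 M' \<or> induced_matching F2 M'
      \<Longrightarrow> covered M' \<subseteq> W"
  shows "maximal_induced_matching F1 M \<longleftrightarrow> maximal_induced_matching F2 M"
proof -
  have "maximal_induced_matching G2 M"
    if "graph V G1" "graph V G2" "maximal_induced_matching G1 M"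
      and agree: "\<And>a b. a \<in> W \<Longrightarrow> b \<in> W \<Longrightarrow> {a, b} \<in> G1 \<longleftrightarrow> {a, b} \<in> G2"
      and confined: "\<And>M'. M \<subseteq> M' \<Longrightarrow> induced_matching G1 M' \<or> induced_matching G2 M'
        \<Longrightarrow> covered M' \<subseteq> W"
    for G1 G2
  proof (rule maximal_induced_matchingI)
    have "induced_matching G1 M"
      using that(3) by (rule maximal_induced_matchingD)
    then show "induced_matching G2 M"
      using induced_matching_cong[OF that(1) confined agree] by blast
    fix M'
    assume M': "induced_matching G2 M'" "M \<subset> M'"
    then have "induced_matching G1 M'"
      using induced_matching_cong[OF that(2) confined, of M' G1] agree by blast
    then show False
      using maximal_induced_matching_maximal[OF that(3)] M'(2) by blast
  qed
  moreover have "\<And>a b. a \<in> W \<Longrightarrow> b \<in> W \<Longrightarrow> {a, b} \<in> F2 \<longleftrightarrow> {a, b} \<in> F1"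
    using agree by blast
  moreover have "\<And>M'. M \<subseteq> M' \<Longrightarrow> induced_matching F2 M' \<or> induced_matching F1 M'
      \<Longrightarrow> covered M' \<subseteq> W"
    using confined by blast
  ultimately show ?thesis
    using assms(1,2) agree confined by metis
qed

lemma maximal_induced_matching_extend:
  assumes "graph V F" "induced_matching F M"
  obtains M' where "M \<subseteq> M'" "maximal_induced_matching F M'"
proof -
  let ?S = "{M'. M \<subseteq> M' \<and> induced_matching F M'}"
  have "?S \<subseteq> Pow F"
    using induced_matching_edges by auto
  then have "finite ?S"
    using finite_graph_edges[OF assms(1)] by (simp add: finite_subset)
  moreover have "?S \<noteq> {}"
    using assms(2) by blast
  ultimately obtain M' where M': "M' \<in> ?S" "\<forall>M''\<in>?S. M' \<subseteq> M'' \<longrightarrow> M' = M''"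
    using finite_has_maximal by meson
  have "maximal_induced_matching F M'"
  proof (rule maximal_induced_matchingI)
    show "induced_matching F M'"
      using M'(1) by blast
    show False if "induced_matching F M''" "M' \<subset> M''" for M''
    proof -
      have "M'' \<in> ?S"
        using M'(1) that by auto
      then show False
        using M'(2) that(2) by blast
    qed
  qed
  then show ?thesis
    using M'(1) that by blast
qed

lemma finite_MIM:
  assumes "graph V F"
  shows "finite (MIM F)"
proof -
  have "MIM F \<subseteq> Pow F"
    unfolding MIM_def using induced_matching_edges maximal_induced_matchingD by auto
  then show ?thesis
    using finite_graph_edges[OF assms] by (simp add: finite_subset)
qed

lemma induced_matching_insert:
  assumes "graph V F" "induced_matching F M" "{a, b} \<in> F"
    and "nbhd F a \<inter> covered M = {}" "nbhd F b \<inter> covered M = {}"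
  shows "induced_matching F (insert {a, b} M)" "{a, b} \<notin> M"
proof -
  have uncovered: "a \<notin> covered M" "b \<notin> covered M"
    using assms(4,5) induced_matching_card[OF assms(2), of a] induced_matching_card[OF assms(2), of b]
    by auto
  then show "{a, b} \<notin> M"
    unfolding covered_def by blast
  have cov: "covered (insert {a, b} M) = {a, b} \<union> covered M"
    unfolding covered_def by simp
  show "induced_matching F (insert {a, b} M)"
  proof (rule induced_matchingI)
    show "insert {a, b} M \<subseteq> F"
      using assms(2,3) induced_matching_edges by blast
    have "{a, b} \<inter> g = {}" if "g \<in> M" for g
      using uncovered that unfolding covered_def by blast
    then show "e \<inter> f = {}" if "e \<in> insert {a, b} M" "f \<in> insert {a, b} M" "e \<noteq> f" for e f
      using that induced_matching_disjoint[OF assms(2), of e f] by (auto simp: Int_commute)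
    fix x
    assume "x \<in> covered (insert {a, b} M)"
    then consider "x = a" | "x = b" | "x \<in> covered M"
      unfolding cov by blast
    then show "card (nbhd F x \<inter> covered (insert {a, b} M)) = 1"
    proof cases
      case 1
      have "b \<in> nbhd F a" "a \<notin> nbhd F a"
        using assms(3) nbhd_irrefl[OF assms(1)] by (simp_all add: nbhd_iff)
      then have "nbhd F a \<inter> ({a, b} \<union> covered M) = {b}"
        using assms(4) by blast
      then show ?thesis
        using 1 cov by simp
    next
      case 2
      have "a \<in> nbhd F b" "b \<notin> nbhd F b"
        using assms(3) nbhd_irrefl[OF assms(1)] by (simp_all add: nbhd_iff insert_commute)
      then have "nbhd F b \<inter> ({a, b} \<union> covered M) = {a}"
        using assms(5) by blast
      then show ?thesis
        using 2 cov by simp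
    next
      case 3
      have "a \<notin> nbhd F x" "b \<notin> nbhd F x"
        using 3 assms(4,5) by (auto simp: nbhd_iff insert_commute)
      then have "nbhd F x \<inter> covered (insert {a, b} M) = nbhd F x \<inter> covered M"
        unfolding cov by blast
      then show ?thesis
        using induced_matching_card[OF assms(2) 3] by simp
    qed
  qed
qed

lemma maximal_induced_matchings_eq:
  assumes "graph V F1" "graph V F2"
    and agree: "\<And>a b. a \<in> W \<Longrightarrow> b \<in> W \<Longrightarrow> {a, b} \<in> F1 \<longleftrightarrow> {a, b} \<in> F2"
    and "maximal_induced_matching F1 M1" "maximal_induced_matching F1 M2"
    and "covered M1 \<subseteq> W" "covered M2 \<subseteq> W"
    and "M1 \<union> M2 \<subseteq> M" "induced_matching F2 M"
  shows "M1 = M2"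
proof -
  have agree': "\<And>a b. a \<in> W \<Longrightarrow> b \<in> W \<Longrightarrow> {a, b} \<in> F2 \<longleftrightarrow> {a, b} \<in> F1"
    using agree by simp
  have "N2 \<subseteq> N1"
    if N1: "maximal_induced_matching F1 N1" "covered N1 \<subseteq> W"
      and N2: "covered N2 \<subseteq> W" "N1 \<union> N2 \<subseteq> M" for N1 N2
  proof
    fix f
    assume "f \<in> N2"
    then have "induced_matching F2 (insert f N1)"
      using induced_matching_subset[OF assms(2,9)] N2(2) by blast
    moreover have "covered (insert f N1) \<subseteq> W"
      using N1(2) N2(1) \<open>f \<in> N2\<close> unfolding covered_def by blast
    ultimately have "induced_matching F1 (insert f N1)"
      using induced_matching_cong[OF assms(2) _ agree'] by blast
    then show "f \<in> N1"
      using maximal_induced_matching_maximal[OF N1(1)] by blast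
  qed
  moreover have "M2 \<union> M1 \<subseteq> M"
    using assms(8) by blast
  ultimately show ?thesis
    using assms(4-8) by (meson subset_antisym)
qed

section \<open>Counting maximal induced matchings through an edge\<close>

definition mim_count :: "'a set set \<Rightarrow> 'a set \<Rightarrow> nat" where
  "mim_count F e = card {M \<in> MIM F. e \<in> M}"

lemma mim_count_nonedge:
  assumes "e \<notin> F"
  shows "mim_count F e = 0"
proof -
  have "{M \<in> MIM F. e \<in> M} = {}"
    using assms induced_matching_edges maximal_induced_matchingD unfolding MIM_def by blast
  then show ?thesis
    unfolding mim_count_def by (simp only: card.empty)
qed

lemma mim_count_cong:
  assumes "graph V F1" "graph V F2"
    and agree: "\<And>a b. a \<in> W \<Longrightarrow> b \<in> W \<Longrightarrow> {a, b} \<in> F1 \<longleftrightarrow> {a, b} \<in> F2"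
    and confined: "\<And>M. e \<in> M \<Longrightarrow> induced_matching F1 M \<or> induced_matching F2 M \<Longrightarrow> covered M \<subseteq> W"
  shows "mim_count F1 e = mim_count F2 e"
proof -
  have "maximal_induced_matching F1 M \<longleftrightarrow> maximal_induced_matching F2 M" if "e \<in> M" for M
    using maximal_induced_matching_cong[OF assms(1,2) agree] confined that by blast
  then have "{M \<in> MIM F1. e \<in> M} = {M \<in> MIM F2. e \<in> M}"
    unfolding MIM_def by auto
  then show ?thesis
    by (simp add: mim_count_def)
qed

text \<open>Every maximal induced matching of F1 through e extends to one of F2 through e, and
  distinct ones cannot share an extension.\<close>

lemma mim_count_le_cong:
  assumes "graph V F1" "graph V F2"
    and agree: "\<And>a b. a \<in> W \<Longrightarrow> b \<in> W \<Longrightarrow> {a, b} \<in> F1 \<longleftrightarrow> {a, b} \<in> F2"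
    and confined: "\<And>M. maximal_induced_matching F1 M \<Longrightarrow> e \<in> M \<Longrightarrow> covered M \<subseteq> W"
  shows "mim_count F1 e \<le> mim_count F2 e"
proof -
  let ?A = "{M \<in> MIM F1. e \<in> M}" and ?B = "{M \<in> MIM F2. e \<in> M}"
  define ext where "ext M = (SOME M'. M \<subseteq> M' \<and> maximal_induced_matching F2 M')" for M
  have ext: "M \<subseteq> ext M" "maximal_induced_matching F2 (ext M)" if "M \<in> ?A" for M
  proof -
    have "maximal_induced_matching F1 M" "e \<in> M"
      using that unfolding MIM_def by auto
    then have "induced_matching F2 M"
      using induced_matching_cong[OF assms(1) confined agree] maximal_induced_matchingD by blast
    then have "\<exists>M'. M \<subseteq> M' \<and> maximal_induced_matching F2 M'"
      using maximal_induced_matching_extend[OF assms(2)] by metis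
    then show "M \<subseteq> ext M" "maximal_induced_matching F2 (ext M)"
      unfolding ext_def by (metis (mono_tags, lifting) someI_ex)+
  qed
  have "inj_on ext ?A"
  proof (rule inj_onI)
    fix M1 M2
    assume M1: "M1 \<in> ?A" and M2: "M2 \<in> ?A" and "ext M1 = ext M2"
    then have "M1 \<union> M2 \<subseteq> ext M1"
      using ext(1) by blast
    moreover have "induced_matching F2 (ext M1)"
      using ext(2)[OF M1] by (rule maximal_induced_matchingD)
    ultimately show "M1 = M2"
      using maximal_induced_matchings_eq[OF assms(1,2) agree] M1 M2 confined
      unfolding MIM_def by auto
  qed
  moreover have "ext ` ?A \<subseteq> ?B"
    using ext unfolding MIM_def by auto
  moreover have "finite ?B"
    using finite_MIM[OF assms(2)] by simp
  ultimately show ?thesis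
    unfolding mim_count_def by (rule card_inj_on_le)
qed

lemma image_involution_iff:
  assumes "\<And>x. \<sigma> (\<sigma> x) = x"
  shows "y \<in> \<sigma> ` A \<longleftrightarrow> \<sigma> y \<in> A"
proof
  show "y \<in> \<sigma> ` A" if "\<sigma> y \<in> A"
    using image_eqI[of y \<sigma> "\<sigma> y" A] that assms by simp
qed (use assms in auto)

lemma nbhd_involution:
  assumes inv: "\<And>x. \<sigma> (\<sigma> x) = x" and hom: "\<And>e. e \<in> F \<Longrightarrow> \<sigma> ` e \<in> F"
  shows "nbhd F (\<sigma> x) = \<sigma> ` nbhd F x"
proof -
  have edge: "{\<sigma> a, \<sigma> b} \<in> F \<longleftrightarrow> {a, b} \<in> F" for a b
    using hom[of "{a, b}"] hom[of "{\<sigma> a, \<sigma> b}"] inv by auto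
  have "y \<in> nbhd F (\<sigma> x) \<longleftrightarrow> y \<in> \<sigma> ` nbhd F x" for y
    using edge[of x "\<sigma> y"] inv by (simp add: nbhd_iff image_involution_iff[OF inv])
  then show ?thesis
    by blast
qed

lemma induced_matching_involution:
  assumes inv: "\<And>x. \<sigma> (\<sigma> x) = x" and hom: "\<And>e. e \<in> F \<Longrightarrow> \<sigma> ` e \<in> F"
    and "induced_matching F M"
  shows "induced_matching F ((`) \<sigma> ` M)"
proof (rule induced_matchingI)
  have "inj \<sigma>"
    by (rule inj_on_inverseI[where g = \<sigma>]) (simp add: inv)
  show "(`) \<sigma> ` M \<subseteq> F"
    using induced_matching_edges[OF assms(3)] hom by blast
  show "e \<inter> f = {}" if ef: "e \<in> (`) \<sigma> ` M" "f \<in> (`) \<sigma> ` M" "e \<noteq> f" for e f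
  proof -
    obtain e0 f0 where "e0 \<in> M" "f0 \<in> M" "e = \<sigma> ` e0" "f = \<sigma> ` f0"
      using ef(1,2) by blast
    moreover have "e0 \<inter> f0 = {}"
      using induced_matching_disjoint[OF assms(3)] calculation ef(3) by blast
    ultimately show ?thesis
      using \<open>inj \<sigma>\<close> by (simp add: image_Int[symmetric])
  qed
  have covered: "covered ((`) \<sigma> ` M) = \<sigma> ` covered M"
    unfolding covered_def by blast
  fix w
  assume "w \<in> covered ((`) \<sigma> ` M)"
  then obtain x where x: "x \<in> covered M" "w = \<sigma> x"
    unfolding covered by blast
  then have "nbhd F w \<inter> covered ((`) \<sigma> ` M) = \<sigma> ` (nbhd F x \<inter> covered M)"
    using nbhd_involution[OF inv hom] \<open>inj \<sigma>\<close> by (simp add: covered image_Int)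
  then show "card (nbhd F w \<inter> covered ((`) \<sigma> ` M)) = 1"
    using induced_matching_card[OF assms(3) x(1)] \<open>inj \<sigma>\<close> by (simp add: card_image inj_on_subset)
qed

lemma maximal_induced_matching_involution:
  assumes inv: "\<And>x. \<sigma> (\<sigma> x) = x" and hom: "\<And>e. e \<in> F \<Longrightarrow> \<sigma> ` e \<in> F"
    and "maximal_induced_matching F M"
  shows "maximal_induced_matching F ((`) \<sigma> ` M)"
proof (rule maximal_induced_matchingI)
  show "induced_matching F ((`) \<sigma> ` M)"
    using induced_matching_involution[OF inv hom maximal_induced_matchingD[OF assms(3)]] .
  have image_twice: "(`) \<sigma> ` (`) \<sigma> ` N = N" for N
    using inv by (simp add: image_image)
  fix M'
  assume M': "induced_matching F M'" "(`) \<sigma> ` M \<subset> M'"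
  have im: "induced_matching F ((`) \<sigma> ` M')"
    using induced_matching_involution[OF inv hom M'(1)] .
  have "inj_on ((`) \<sigma>) M'"
    by (rule inj_on_inverseI[where g = "(`) \<sigma>"]) (simp add: image_image inv)
  then have "(`) \<sigma> ` (`) \<sigma> ` M \<subset> (`) \<sigma> ` M'"
    using M'(2) by (rule image_strict_mono)
  then have "M \<subset> (`) \<sigma> ` M'"
    by (simp only: image_twice)
  then show False
    using maximal_induced_matching_maximal[OF assms(3) im] by blast
qed

lemma mim_count_involution:
  assumes inv: "\<And>x. \<sigma> (\<sigma> x) = x" and hom: "\<And>e. e \<in> F \<Longrightarrow> \<sigma> ` e \<in> F"
  shows "mim_count F (\<sigma> ` e) = mim_count F e"
proof -
  let ?\<Phi> = "(`) ((`) \<sigma>)"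
  have image_twice: "(`) \<sigma> ` (`) \<sigma> ` N = N" "\<sigma> ` \<sigma> ` e = e" for N
    using inv by (simp_all add: image_image)
  have maps: "?\<Phi> ` {M \<in> MIM F. e' \<in> M} \<subseteq> {M \<in> MIM F. \<sigma> ` e' \<in> M}" for e'
    using maximal_induced_matching_involution[OF inv hom] unfolding MIM_def by blast
  have "bij_betw ?\<Phi> {M \<in> MIM F. e \<in> M} {M \<in> MIM F. \<sigma> ` e \<in> M}"
  proof (rule bij_betw_byWitness[where f' = ?\<Phi>])
    show "?\<Phi> ` {M \<in> MIM F. \<sigma> ` e \<in> M} \<subseteq> {M \<in> MIM F. e \<in> M}"
      using maps[of "\<sigma> ` e"] image_twice(2) by simp
  qed (use maps image_twice(1) in simp_all)
  then show ?thesis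
    unfolding mim_count_def by (simp add: bij_betw_same_card)
qed

definition pairs_in :: "'a set \<Rightarrow> 'a set set" where
  "pairs_in A = {e. e \<subseteq> A \<and> card e = 2}"

definition pairs_between :: "'a set \<Rightarrow> 'a set \<Rightarrow> 'a set set" where
  "pairs_between A B = (\<lambda>(a, b). {a, b}) ` (A \<times> B)"

lemma card_pairs_in: "finite A \<Longrightarrow> card (pairs_in A) = card A choose 2"
  unfolding pairs_in_def by (rule n_subsets)

lemma finite_pairs_in: "finite A \<Longrightarrow> finite (pairs_in A)"
  unfolding pairs_in_def by (simp add: finite_subset)

lemma pairs_in_Un_subset: "pairs_in (A \<union> B) \<subseteq> pairs_in A \<union> pairs_in B \<union> pairs_between A B"
proof
  fix e
  assume "e \<in> pairs_in (A \<union> B)"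
  then obtain a b where "e = {a, b}" "a \<noteq> b" "a \<in> A \<union> B" "b \<in> A \<union> B"
    unfolding pairs_in_def by (auto simp: card_2_iff)
  then show "e \<in> pairs_in A \<union> pairs_in B \<union> pairs_between A B"
    unfolding pairs_in_def pairs_between_def by (auto simp: insert_commute)
qed

lemma card_pairs_between_le:
  "finite A \<Longrightarrow> finite B \<Longrightarrow> card (pairs_between A B) \<le> card A * card B"
proof -
  assume "finite A" "finite B"
  then have "card (pairs_between A B) \<le> card (A \<times> B)"
    unfolding pairs_between_def by (intro card_image_le finite_cartesian_product)
  then show ?thesis
    by (simp add: card_cartesian_product)
qed

lemma pairs_between_commute: "pairs_between A B = pairs_between B A"
  unfolding pairs_between_def by (auto simp: insert_commute)

lemma sum_pairs_between:
  assumes "A \<inter> B = {}"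
  shows "(\<Sum>e\<in>pairs_between A B. f e) = (\<Sum>a\<in>A. \<Sum>b\<in>B. f {a, b})"
proof -
  have "inj_on (\<lambda>(a, b). {a, b}) (A \<times> B)"
    using assms by (auto simp: inj_on_def doubleton_eq_iff)
  then show ?thesis
    unfolding pairs_between_def by (simp add: sum.reindex sum.cartesian_product prod.case_distrib)
qed

lemma sum_Un_le:
  fixes f :: "'a \<Rightarrow> nat"
  assumes "finite A" "finite B"
  shows "sum f (A \<union> B) \<le> sum f A + sum f B"
  using sum.union_inter[OF assms, of f] by linarith

text \<open>Distinct edges of an induced matching are joined by no edge, so at most one of them
  meets a clique.\<close>

lemma induced_matching_clique_edge_unique:
  assumes "graph V F" and clique: "\<And>a b. a \<in> K \<Longrightarrow> b \<in> K \<Longrightarrow> a \<noteq> b \<Longrightarrow> {a, b} \<in> F"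
    and im: "induced_matching F M" and M: "e1 \<in> M" "e2 \<in> M"
    and K: "e1 \<inter> K \<noteq> {}" "e2 \<inter> K \<noteq> {}"
  shows "e1 = e2"
proof (rule ccontr)
  assume "e1 \<noteq> e2"
  with im M have disj: "e1 \<inter> e2 = {}"
    by (rule induced_matching_disjoint)
  obtain a1 a2 where a: "a1 \<in> e1 \<inter> K" "a2 \<in> e2 \<inter> K"
    using K by blast
  obtain b1 where b1: "e1 = {a1, b1}"
    using graph_edge_at[OF assms(1)] induced_matching_edges[OF im] M(1) a(1) by blast
  have "{a1, a2} \<in> F"
    using clique a disj by blast
  moreover have "a2 \<in> covered M"
    using M(2) a(2) unfolding covered_def by blast
  ultimately have "a2 = b1"
    using induced_matching_partner[OF im] M(1) b1 by blast
  then show False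
    using disj a b1 by blast
qed

lemma card_MIM_split_clique:
  assumes "graph V F" and clique: "\<And>a b. a \<in> K \<Longrightarrow> b \<in> K \<Longrightarrow> a \<noteq> b \<Longrightarrow> {a, b} \<in> F"
  shows "card (MIM F) = card {M \<in> MIM F. covered M \<inter> K = {}}
    + (\<Sum>e\<in>{e \<in> F. e \<inter> K \<noteq> {}}. mim_count F e)"
proof -
  let ?A = "{M \<in> MIM F. covered M \<inter> K = {}}" and ?C = "\<lambda>e. {M \<in> MIM F. e \<in> M}"
  let ?EK = "{e \<in> F. e \<inter> K \<noteq> {}}"
  have one_edge: "e1 = e2"
    if "M \<in> MIM F" "e1 \<in> M" "e2 \<in> M" "e1 \<inter> K \<noteq> {}" "e2 \<inter> K \<noteq> {}" for M e1 e2
    using induced_matching_clique_edge_unique[OF assms _ that(2-5)] that(1) maximal_induced_matchingD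
    unfolding MIM_def by blast
  have "M \<in> ?A \<union> (\<Union>e\<in>?EK. ?C e)" if "M \<in> MIM F" for M
  proof (cases "covered M \<inter> K = {}")
    case False
    then obtain e where "e \<in> M" "e \<inter> K \<noteq> {}"
      unfolding covered_def by blast
    moreover have "e \<in> F"
      using that \<open>e \<in> M\<close> induced_matching_edges maximal_induced_matchingD unfolding MIM_def by blast
    ultimately show ?thesis
      using that by blast
  qed (use that in blast)
  then have "MIM F = ?A \<union> (\<Union>e\<in>?EK. ?C e)"
    by blast
  moreover have "?A \<inter> (\<Union>e\<in>?EK. ?C e) = {}"
    unfolding covered_def by blast
  moreover have "finite (MIM F)" "finite ?EK"
    using finite_MIM[OF assms(1)] finite_graph_edges[OF assms(1)] by simp_all
  ultimately have "card (MIM F) = card ?A + card (\<Union>e\<in>?EK. ?C e)"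
    using card_Un_disjoint[of ?A "\<Union>e\<in>?EK. ?C e"] by simp
  also have "card (\<Union>e\<in>?EK. ?C e) = (\<Sum>e\<in>?EK. card (?C e))"
    using \<open>finite ?EK\<close> \<open>finite (MIM F)\<close> one_edge by (intro card_UN_disjoint) auto
  finally show ?thesis
    unfolding mim_count_def .
qed

lemma sum_edges_meeting:
  assumes "graph V F" "K \<subseteq> V" and vanish: "\<And>e. e \<notin> F \<Longrightarrow> f e = 0"
  shows "(\<Sum>e\<in>{e \<in> F. e \<inter> K \<noteq> {}}. f e) = (\<Sum>k\<in>K. \<Sum>r\<in>V - K. f {k, r}) + (\<Sum>e\<in>pairs_in K. f e)"
proof -
  have finite: "finite V" "finite K"
    using finite_graph_vertices[OF assms(1)] assms(2) finite_subset by blast+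
  have "{e \<in> F. e \<inter> K \<noteq> {}} \<subseteq> pairs_between K (V - K) \<union> pairs_in K"
  proof
    fix e
    assume "e \<in> {e \<in> F. e \<inter> K \<noteq> {}}"
    then obtain a b where "e = {a, b}" "a \<in> K" "a \<noteq> b" "b \<in> V"
      using graph_edge_at[OF assms(1)] by blast
    then show "e \<in> pairs_between K (V - K) \<union> pairs_in K"
      unfolding pairs_between_def pairs_in_def by auto
  qed
  moreover have "e \<inter> K \<noteq> {}" if "e \<in> pairs_between K (V - K) \<union> pairs_in K" for e
    using that unfolding pairs_between_def pairs_in_def by (auto simp: card_2_iff)
  ultimately have "(\<Sum>e\<in>{e \<in> F. e \<inter> K \<noteq> {}}. f e) = (\<Sum>e\<in>pairs_between K (V - K) \<union> pairs_in K. f e)"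
    using vanish finite
    by (intro sum.mono_neutral_left) (auto simp: pairs_between_def finite_pairs_in)
  also have "\<dots> = (\<Sum>e\<in>pairs_between K (V - K). f e) + (\<Sum>e\<in>pairs_in K. f e)"
    using finite by (intro sum.union_disjoint)
      (auto simp: pairs_between_def pairs_in_def finite_pairs_in)
  finally show ?thesis
    by (simp add: sum_pairs_between)
qed

lemma card_MIM_clique:
  assumes "graph V F" "K \<subseteq> V" "\<And>a b. a \<in> K \<Longrightarrow> b \<in> K \<Longrightarrow> a \<noteq> b \<Longrightarrow> {a, b} \<in> F"
  shows "card (MIM F) = card {M \<in> MIM F. covered M \<inter> K = {}}
    + (\<Sum>k\<in>K. \<Sum>r\<in>V - K. mim_count F {k, r}) + (\<Sum>e\<in>pairs_in K. mim_count F e)"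
  using card_MIM_split_clique[OF assms(1,3)] sum_edges_meeting[OF assms(1,2) mim_count_nonedge]
  by simp

section \<open>Merging the twin classes of an edge\<close>

lemma cnbhd_sym: "a \<in> cnbhd F b \<longleftrightarrow> b \<in> cnbhd F a"
  by (auto simp: cnbhd_iff insert_commute)

lemma twins_iff: "a \<in> twins V F w \<longleftrightarrow> a \<in> V \<and> cnbhd F a = cnbhd F w"
  by (simp add: twins_def)

locale nontwin_edge =
  fixes V :: "'a set" and E :: "'a set set" and u v :: 'a
  assumes graph: "graph V E" and edge: "{u, v} \<in> E" and not_twins: "cnbhd E u \<noteq> cnbhd E v"
begin

abbreviation "X \<equiv> twins V E u"
abbreviation "Y \<equiv> twins V E v"
abbreviation "K \<equiv> X \<union> Y"
abbreviation "F \<equiv> make_twins E Y u"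

lemma swapped: "nontwin_edge V E v u"
  using graph edge not_twins by unfold_locales (auto simp: insert_commute)

lemma u_in_X: "u \<in> X" and v_in_Y: "v \<in> Y"
  using graph_edge_vertices[OF graph edge] by (simp_all add: twins_iff)

lemma twins_disjoint: "X \<inter> Y = {}"
  using not_twins by (auto simp: twins_iff)

lemma K_subset_V: "K \<subseteq> V"
  by (auto simp: twins_iff)

lemma K_subset_cnbhd: "K \<subseteq> cnbhd E u \<inter> cnbhd E v"
proof
  fix a
  assume "a \<in> K"
  then have "cnbhd E a = cnbhd E u \<or> cnbhd E a = cnbhd E v"
    by (auto simp: twins_iff)
  moreover have "u \<in> cnbhd E u" "v \<in> cnbhd E u" "u \<in> cnbhd E v" "v \<in> cnbhd E v"
    using edge by (auto simp: cnbhd_iff insert_commute)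
  ultimately have "u \<in> cnbhd E a" "v \<in> cnbhd E a"
    by auto
  then show "a \<in> cnbhd E u \<inter> cnbhd E v"
    by (simp add: cnbhd_sym[of a E u] cnbhd_sym[of a E v])
qed

lemma clique_E:
  assumes "a \<in> K" "b \<in> K" "a \<noteq> b"
  shows "{a, b} \<in> E"
proof -
  have "b \<in> cnbhd E u" "b \<in> cnbhd E v"
    using assms(2) K_subset_cnbhd by blast+
  moreover have "cnbhd E a = cnbhd E u \<or> cnbhd E a = cnbhd E v"
    using assms(1) by (auto simp: twins_iff)
  ultimately have "b \<in> cnbhd E a"
    by auto
  then show ?thesis
    using assms(3) by (simp add: cnbhd_iff)
qed

lemma F_edge_off_Y: "a \<notin> Y \<Longrightarrow> b \<notin> Y \<Longrightarrow> {a, b} \<in> F \<longleftrightarrow> {a, b} \<in> E"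
  unfolding make_twins_def by (auto simp: doubleton_eq_iff)

lemma F_edge_at_Y:
  assumes "w \<in> Y" "z \<noteq> w"
  shows "{w, z} \<in> F \<longleftrightarrow> z \<in> cnbhd E u"
proof -
  have Y_cnbhd: "y \<in> cnbhd E u" if "y \<in> Y" for y
    using that K_subset_cnbhd by blast
  have w_cnbhd: "w \<in> cnbhd E w'" if "w' \<in> Y" for w'
  proof -
    have "cnbhd E w' = cnbhd E w"
      using that assms(1) by (simp add: twins_iff)
    then show ?thesis
      by (simp add: cnbhd_iff)
  qed
  have removed: "{w, z} \<in> {{w', x} | w' x. w' \<in> Y \<and> x \<in> nbhd E w' - cnbhd E u}
      \<longleftrightarrow> z \<in> nbhd E w - cnbhd E u"
    using assms Y_cnbhd by (auto simp: doubleton_eq_iff)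
  have added: "{w, z} \<in> {{w', y} | w' y. w' \<in> Y \<and> y \<in> nbhd E u - cnbhd E w'}
      \<longleftrightarrow> z \<in> nbhd E u - cnbhd E w"
    using assms w_cnbhd by (auto simp: doubleton_eq_iff)
  have "u \<in> cnbhd E w"
    using Y_cnbhd[OF assms(1)] by (simp add: cnbhd_sym[of u E w])
  then have "z \<in> cnbhd E u \<Longrightarrow> {w, z} \<in> E \<or> z \<in> nbhd E u"
    using assms(2) by (auto simp: cnbhd_def nbhd_iff)
  moreover have "z \<in> nbhd E w \<longleftrightarrow> {w, z} \<in> E" "z \<in> cnbhd E w \<longleftrightarrow> {w, z} \<in> E"
    using assms(2) by (simp_all add: nbhd_iff cnbhd_iff)
  moreover have "z \<in> nbhd E u \<Longrightarrow> z \<in> cnbhd E u"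
    by (simp add: cnbhd_def)
  ultimately show ?thesis
    unfolding make_twins_def Un_iff Diff_iff[of "{w, z}" E] removed added by blast
qed

lemma graph_F: "graph V F"
  unfolding graph_def
proof (intro conjI ballI)
  show "finite V"
    using graph by (rule finite_graph_vertices)
  fix e
  assume "e \<in> F"
  show "\<exists>x y. e = {x, y} \<and> x \<noteq> y \<and> x \<in> V \<and> y \<in> V"
  proof (cases "e \<in> E")
    case True
    then show ?thesis
      using graph_edgeE[OF graph] by metis
  next
    case False
    then obtain w y where wy: "e = {w, y}" "w \<in> Y" "{u, y} \<in> E" "y \<notin> cnbhd E w"
      using \<open>e \<in> F\<close> unfolding make_twins_def by (auto simp: nbhd_iff)
    then have "w \<in> V" "y \<in> V" "w \<noteq> y"
      using graph_edge_vertices[OF graph] by (auto simp: twins_iff cnbhd_iff)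
    then show ?thesis
      using wy(1) by blast
  qed
qed

lemma F_edge_at_K:
  assumes "k \<in> K" "z \<noteq> k"
  shows "{k, z} \<in> F \<longleftrightarrow> z \<in> cnbhd E u"
proof (cases "k \<in> Y")
  case True
  then show ?thesis
    using F_edge_at_Y assms(2) by blast
next
  case False
  then have "k \<in> X"
    using assms(1) by blast
  then have "cnbhd E k = cnbhd E u"
    by (simp add: twins_iff)
  show ?thesis
  proof (cases "z \<in> Y")
    case True
    then show ?thesis
      using F_edge_at_Y[OF True] assms K_subset_cnbhd by (auto simp: insert_commute)
  next
    case False
    have "{k, z} \<in> E \<longleftrightarrow> z \<in> cnbhd E k"
      using assms(2) by (simp add: cnbhd_iff)
    then show ?thesis
      using F_edge_off_Y[OF \<open>k \<notin> Y\<close> False] \<open>cnbhd E k = cnbhd E u\<close> by simp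
  qed
qed

lemma clique_F:
  assumes "a \<in> K" "b \<in> K" "a \<noteq> b"
  shows "{a, b} \<in> F"
proof -
  have "b \<in> cnbhd E u"
    using assms(2) K_subset_cnbhd by blast
  then show ?thesis
    using F_edge_at_K[OF assms(1)] assms(3) by simp
qed

text \<open>In F the clique K is a class of twins, so transpositions inside K are automorphisms.\<close>

lemma transpose_edge_F:
  assumes "k1 \<in> K" "k2 \<in> K" "e \<in> F"
  shows "Transposition.transpose k1 k2 ` e \<in> F"
proof -
  let ?\<tau> = "Transposition.transpose k1 k2"
  have \<tau>_K: "?\<tau> a \<in> K" if "a \<in> K" for a
    using assms(1,2) that by (auto simp: transpose_def)
  have \<tau>_cnbhd: "?\<tau> b \<in> cnbhd E u" if "b \<in> cnbhd E u" for b
    using assms(1,2) K_subset_cnbhd that by (auto simp: transpose_def)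
  have at_K: "{?\<tau> a, ?\<tau> b} \<in> F" if "{a, b} \<in> F" "a \<in> K" "a \<noteq> b" for a b
  proof -
    have "b \<in> cnbhd E u"
      using F_edge_at_K[OF that(2) that(3)[symmetric]] that(1) by simp
    moreover have "?\<tau> b \<noteq> ?\<tau> a"
      using that(3) by (auto dest: transpose_eq_imp_eq)
    ultimately show ?thesis
      using F_edge_at_K[OF \<tau>_K[OF that(2)]] \<tau>_cnbhd by simp
  qed
  obtain a b where ab: "e = {a, b}" "a \<noteq> b"
    using graph_edgeE[OF graph_F assms(3)] by metis
  consider "a \<in> K" | "b \<in> K" | "a \<notin> K" "b \<notin> K"
    by blast
  then have "{?\<tau> a, ?\<tau> b} \<in> F"
  proof cases
    case 1
    then show ?thesis
      using at_K assms(3) ab by blast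
  next
    case 2
    have "{b, a} \<in> F"
      using assms(3) ab(1) by (simp add: insert_commute)
    then have "{?\<tau> b, ?\<tau> a} \<in> F"
      using at_K 2 ab(2) by blast
    then show ?thesis
      by (simp add: insert_commute)
  next
    case 3
    then have "?\<tau> a = a" "?\<tau> b = b"
      using assms(1,2) by (auto simp: transpose_def)
    then show ?thesis
      using assms(3) ab by simp
  qed
  then show ?thesis
    using ab by simp
qed

lemma mim_count_F_transpose:
  "k1 \<in> K \<Longrightarrow> k2 \<in> K \<Longrightarrow> mim_count F (Transposition.transpose k1 k2 ` e) = mim_count F e"
  by (rule mim_count_involution) (simp_all add: transpose_edge_F)

lemma mim_count_F_cross:
  assumes "k \<in> K" "r \<notin> K"
  shows "mim_count F {k, r} = mim_count F {u, r}"
proof -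
  have "r \<noteq> k" "r \<noteq> u"
    using assms u_in_X by auto
  then have "Transposition.transpose k u ` {k, r} = {u, r}"
    by simp
  then show ?thesis
    using mim_count_F_transpose[OF assms(1), of u "{k, r}"] u_in_X by simp
qed

lemma mim_count_F_pair:
  assumes "e \<in> pairs_in K"
  shows "mim_count F e = mim_count F {u, v}"
proof -
  obtain k1 k2 where k: "e = {k1, k2}" "k1 \<noteq> k2" "k1 \<in> K" "k2 \<in> K"
    using assms unfolding pairs_in_def by (auto simp: card_2_iff)
  define k3 where "k3 = Transposition.transpose k1 u k2"
  have "k3 \<in> K" "k3 \<noteq> u"
    using k u_in_X unfolding k3_def by (auto simp: transpose_def)
  have "Transposition.transpose k1 u ` e = {u, k3}"
    using k unfolding k3_def by simp
  then have first: "mim_count F e = mim_count F {u, k3}"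
    using mim_count_F_transpose[OF k(3), of u e] u_in_X by simp
  have "u \<noteq> v"
    using u_in_X v_in_Y twins_disjoint by blast
  then have "Transposition.transpose k3 v ` {u, k3} = {u, v}"
    using \<open>k3 \<noteq> u\<close> by simp
  then have "mim_count F {u, k3} = mim_count F {u, v}"
    using mim_count_F_transpose[OF \<open>k3 \<in> K\<close>, of v "{u, k3}"] v_in_Y by simp
  then show ?thesis
    using first by simp
qed

definition cross_count :: nat where
  "cross_count = (\<Sum>r\<in>V - K. mim_count F {u, r})"

definition pair_count :: nat where
  "pair_count = mim_count F {u, v}"

lemma card_MIM_F:
  "card (MIM F) = card {M \<in> MIM F. covered M \<inter> K = {}} + card K * cross_count
    + (card K choose 2) * pair_count"
proof -
  have "finite K"
    using K_subset_V finite_graph_vertices[OF graph] finite_subset by blast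
  have "(\<Sum>k\<in>K. \<Sum>r\<in>V - K. mim_count F {k, r}) = (\<Sum>k\<in>K. cross_count)"
    unfolding cross_count_def by (intro sum.cong refl) (simp add: mim_count_F_cross)
  moreover have "(\<Sum>e\<in>pairs_in K. mim_count F e) = (\<Sum>e\<in>pairs_in K. pair_count)"
    unfolding pair_count_def by (intro sum.cong refl) (rule mim_count_F_pair)
  ultimately show ?thesis
    using card_MIM_clique[OF graph_F K_subset_V clique_F] \<open>finite K\<close> by (simp add: card_pairs_in)
qed


lemma mim_count_E_eq_F:
  assumes "k \<in> X" "z \<notin> Y"
  shows "mim_count E {k, z} = mim_count F {k, z}"
proof (rule mim_count_cong[OF graph graph_F, of "V - Y"])
  show "{a, b} \<in> E \<longleftrightarrow> {a, b} \<in> F" if "a \<in> V - Y" "b \<in> V - Y" for a b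
    using F_edge_off_Y[of a b] that by simp
  fix M
  assume M: "{k, z} \<in> M" "induced_matching E M \<or> induced_matching F M"
  have "y \<notin> covered M" if "y \<in> Y" for y
  proof
    assume "y \<in> covered M"
    have "k \<noteq> y"
      using assms(1) that twins_disjoint by blast
    then have "{k, y} \<in> E" "{k, y} \<in> F"
      using clique_E clique_F assms(1) that by blast+
    then have "y = z"
      using M induced_matching_partner[OF _ M(1) \<open>y \<in> covered M\<close>] by blast
    then show False
      using assms(2) that by blast
  qed
  moreover have "covered M \<subseteq> V"
    using M(2) covered_subset_vertices graph graph_F by blast
  ultimately show "covered M \<subseteq> V - Y"
    by blast
qed

text \<open>A matching edge between X and Y dominates N[u] and N[v], so the rest of the matching
  lies where E and F agree.\<close>

lemma covered_through_XY:
  assumes "x0 \<in> X" "y0 \<in> Y" "induced_matching E M" "{x0, y0} \<in> M"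
  shows "covered M \<subseteq> {x0, y0} \<union> (V - (cnbhd E u \<union> cnbhd E v))"
proof
  fix c
  assume c: "c \<in> covered M"
  show "c \<in> {x0, y0} \<union> (V - (cnbhd E u \<union> cnbhd E v))"
  proof (cases "c \<in> {x0, y0}")
    case False
    have "c \<notin> cnbhd E u"
    proof
      assume "c \<in> cnbhd E u"
      then have "c \<in> cnbhd E x0"
        using assms(1) by (simp add: twins_iff)
      then have "{x0, c} \<in> E"
        using False by (simp add: cnbhd_iff)
      then show False
        using induced_matching_partner[OF assms(3,4) c] False by blast
    qed
    moreover have "c \<notin> cnbhd E v"
    proof
      assume "c \<in> cnbhd E v"
      then have "c \<in> cnbhd E y0"
        using assms(2) by (simp add: twins_iff)
      then have "{y0, c} \<in> E"
        using False by (simp add: cnbhd_iff)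
      moreover have "{y0, x0} \<in> M"
        using assms(4) by (simp add: insert_commute)
      ultimately show False
        using induced_matching_partner[OF assms(3) _ c] False by blast
    qed
    moreover have "c \<in> V"
      using covered_subset_vertices[OF graph assms(3)] c by blast
    ultimately show ?thesis
      by blast
  qed blast
qed

lemma E_F_agree_through_XY:
  assumes "x0 \<in> X" "y0 \<in> Y"
    and "a \<in> {x0, y0} \<union> (V - (cnbhd E u \<union> cnbhd E v))"
    and "b \<in> {x0, y0} \<union> (V - (cnbhd E u \<union> cnbhd E v))"
  shows "{a, b} \<in> E \<longleftrightarrow> {a, b} \<in> F"
proof -
  have "x0 \<noteq> y0"
    using assms(1,2) twins_disjoint by blast
  have at_y0: "{y0, c} \<in> E \<longleftrightarrow> {y0, c} \<in> F"
    if c: "c \<in> {x0, y0} \<union> (V - (cnbhd E u \<union> cnbhd E v))" for c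
  proof -
    consider "c = y0" | "c = x0" | "c \<noteq> y0" "c \<notin> cnbhd E u" "c \<notin> cnbhd E v"
      using c by blast
    then show ?thesis
    proof cases
      case 1
      then show ?thesis
        using graph_edge_vertices(3)[OF graph, of y0 y0] graph_edge_vertices(3)[OF graph_F, of y0 y0]
        by auto
    next
      case 2
      then show ?thesis
        using clique_E clique_F assms(1,2) \<open>x0 \<noteq> y0\<close> by blast
    next
      case 3
      have "{y0, c} \<in> E \<longleftrightarrow> c \<in> cnbhd E y0"
        using 3(1) by (simp add: cnbhd_iff)
      also have "cnbhd E y0 = cnbhd E v"
        using assms(2) by (simp add: twins_iff)
      finally show ?thesis
        using F_edge_at_Y[OF assms(2) 3(1)] 3(2,3) by simp
    qed
  qed
  have "Y \<inter> ({x0, y0} \<union> (V - (cnbhd E u \<union> cnbhd E v))) \<subseteq> {y0}"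
    using assms(1) twins_disjoint K_subset_cnbhd by blast
  then consider "a = y0" | "b = y0" | "a \<notin> Y" "b \<notin> Y"
    using assms(3,4) by blast
  then show ?thesis
  proof cases
    case 1
    then show ?thesis
      using at_y0[OF assms(4)] by simp
  next
    case 2
    then show ?thesis
      using at_y0[OF assms(3)] by (simp add: insert_commute)
  next
    case 3
    then show ?thesis
      using F_edge_off_Y by simp
  qed
qed

lemma mim_count_E_le_F:
  assumes "x0 \<in> X" "y0 \<in> Y"
  shows "mim_count E {x0, y0} \<le> mim_count F {x0, y0}"
  using mim_count_le_cong[OF graph graph_F E_F_agree_through_XY[OF assms]]
    covered_through_XY[OF assms] maximal_induced_matchingD by blast

lemma finite_twins: "finite X" "finite Y"
  using K_subset_V finite_graph_vertices[OF graph] finite_subset by blast+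

lemma sum_cross_X: "(\<Sum>k\<in>X. \<Sum>r\<in>V - K. mim_count E {k, r}) = card X * cross_count"
proof -
  have "mim_count E {k, r} = mim_count F {u, r}" if "k \<in> X" "r \<in> V - K" for k r
    using mim_count_E_eq_F[of k r] mim_count_F_cross[of k r] that by simp
  then have "(\<Sum>k\<in>X. \<Sum>r\<in>V - K. mim_count E {k, r}) = (\<Sum>k\<in>X. cross_count)"
    unfolding cross_count_def by (intro sum.cong refl) simp
  then show ?thesis
    by simp
qed

lemma sum_pairs_in_X: "(\<Sum>e\<in>pairs_in X. mim_count E e) = (card X choose 2) * pair_count"
proof -
  have "mim_count E e = pair_count" if e: "e \<in> pairs_in X" for e
  proof -
    obtain k1 k2 where "e = {k1, k2}" "k1 \<in> X" "k2 \<in> X"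
      using e unfolding pairs_in_def by (auto simp: card_2_iff)
    moreover have "e \<in> pairs_in K"
      using e unfolding pairs_in_def by blast
    ultimately show ?thesis
      using mim_count_E_eq_F[of k1 k2] mim_count_F_pair twins_disjoint
      unfolding pair_count_def by auto
  qed
  then show ?thesis
    using finite_twins by (simp add: card_pairs_in)
qed

lemma sum_pairs_between_le:
  "(\<Sum>e\<in>pairs_between X Y. mim_count E e) \<le> card X * card Y * pair_count"
proof -
  have "mim_count E e \<le> pair_count" if e: "e \<in> pairs_between X Y" for e
  proof -
    obtain x y where xy: "e = {x, y}" "x \<in> X" "y \<in> Y"
      using e unfolding pairs_between_def by auto
    moreover have "x \<noteq> y"
      using xy twins_disjoint by blast
    then have "{x, y} \<in> pairs_in K"
      using xy unfolding pairs_in_def by auto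
    ultimately show ?thesis
      using mim_count_E_le_F[of x y] mim_count_F_pair unfolding pair_count_def by simp
  qed
  then have "(\<Sum>e\<in>pairs_between X Y. mim_count E e) \<le> card (pairs_between X Y) * pair_count"
    using sum_bounded_above by (metis of_nat_id)
  also have "\<dots> \<le> card X * card Y * pair_count"
    using card_pairs_between_le[OF finite_twins] by (rule mult_right_mono) simp
  finally show ?thesis .
qed


text \<open>This is where the hypothesis on the v-side is used: a maximal induced matching of E
  avoiding K and N(u) would either be one of the excluded matchings or could be extended by uv.\<close>

lemma avoiding_matching_meets_nbhd:
  assumes no_v_side: "\<not> (\<exists>M. maximal_induced_matching E M \<and>
      covered M \<subseteq> (nbhd E v - cnbhd E u) \<union> (V - (cnbhd E u \<union> cnbhd E v)) \<and>
      covered M \<inter> (nbhd E v - cnbhd E u) \<noteq> {})"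
    and M: "maximal_induced_matching E M" "covered M \<inter> K = {}"
  shows "nbhd E u \<inter> covered M \<noteq> {}"
proof
  assume nu: "nbhd E u \<inter> covered M = {}"
  have im: "induced_matching E M"
    using M(1) by (rule maximal_induced_matchingD)
  have "u \<notin> covered M" "v \<notin> covered M"
    using M(2) u_in_X v_in_Y by blast+
  show False
  proof (cases "nbhd E v \<inter> covered M = {}")
    case True
    then have "induced_matching E (insert {u, v} M)" "{u, v} \<notin> M"
      using induced_matching_insert[OF graph im edge nu] by blast+
    then show False
      using maximal_induced_matching_maximal[OF M(1)] by blast
  next
    case False
    have "covered M \<inter> cnbhd E u = {}"
      using nu \<open>u \<notin> covered M\<close> by (auto simp: cnbhd_def)
    moreover have "covered M \<inter> cnbhd E v \<subseteq> nbhd E v"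
      using \<open>v \<notin> covered M\<close> by (auto simp: cnbhd_def)
    moreover have "covered M \<subseteq> V"
      using covered_subset_vertices[OF graph im] .
    ultimately have "covered M \<subseteq> (nbhd E v - cnbhd E u) \<union> (V - (cnbhd E u \<union> cnbhd E v))"
        "covered M \<inter> (nbhd E v - cnbhd E u) \<noteq> {}"
      using False by blast+
    then show False
      using no_v_side M(1) by blast
  qed
qed

text \<open>If the extension M' reached a vertex y of Y, then y would have to be matched to the
  neighbour of u that M covers, which M already matches elsewhere.\<close>

lemma maximal_induced_matching_F_if_avoiding:
  assumes no_v_side: "\<not> (\<exists>M. maximal_induced_matching E M \<and>
      covered M \<subseteq> (nbhd E v - cnbhd E u) \<union> (V - (cnbhd E u \<union> cnbhd E v)) \<and>
      covered M \<inter> (nbhd E v - cnbhd E u) \<noteq> {})"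
    and M: "maximal_induced_matching E M" "covered M \<inter> K = {}"
  shows "maximal_induced_matching F M"
proof (rule maximal_induced_matchingI)
  have agree: "{a, b} \<in> E \<longleftrightarrow> {a, b} \<in> F" if "a \<in> V - Y" "b \<in> V - Y" for a b
    using F_edge_off_Y[of a b] that by simp
  have im: "induced_matching E M"
    using M(1) by (rule maximal_induced_matchingD)
  then have "covered M \<subseteq> V - Y"
    using covered_subset_vertices[OF graph] M(2) by blast
  then show "induced_matching F M"
    using induced_matching_cong[OF graph _ agree im] by blast
  fix M'
  assume M': "induced_matching F M'" "M \<subset> M'"
  show False
  proof (cases "covered M' \<inter> Y = {}")
    case True
    then have "covered M' \<subseteq> V - Y"
      using covered_subset_vertices[OF graph_F M'(1)] by blast
    then have "induced_matching E M'"
      using induced_matching_cong[OF graph_F _ _ M'(1), of "V - Y" E] agree by blast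
    then show False
      using maximal_induced_matching_maximal[OF M(1)] M'(2) by blast
  next
    case False
    then obtain y e where y: "y \<in> Y" "e \<in> M'" "y \<in> e"
      unfolding covered_def by blast
    obtain s where s: "s \<in> nbhd E u" "s \<in> covered M"
      using avoiding_matching_meets_nbhd[OF no_v_side M] by blast
    then obtain e' where e': "e' \<in> M" "s \<in> e'"
      unfolding covered_def by blast
    have "s \<noteq> y" "y \<notin> e'"
      using s(2) e' y(1) M(2) unfolding covered_def by blast+
    moreover have "s \<in> cnbhd E u"
      using s(1) by (simp add: cnbhd_def)
    ultimately have "{y, s} \<in> F"
      using F_edge_at_Y[OF y(1)] by blast
    obtain q where "e = {y, q}"
      using graph_edge_at[OF graph_F _ y(3)] induced_matching_edges[OF M'(1)] y(2) by blast
    moreover have "s \<in> covered M'"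
      using e' M'(2) unfolding covered_def by blast
    ultimately have "{y, s} \<in> M'"
      using induced_matching_partner[OF M'(1) _ _ \<open>{y, s} \<in> F\<close>] y(2) by blast
    moreover have "e' \<in> M'" "e' \<noteq> {y, s}"
      using e' \<open>y \<notin> e'\<close> M'(2) by blast+
    ultimately show False
      using induced_matching_disjoint[OF M'(1)] e'(2) by blast
  qed
qed

lemma card_MIM_F_ge:
  assumes no_v_side: "\<not> (\<exists>M. maximal_induced_matching E M \<and>
      covered M \<subseteq> (nbhd E v - cnbhd E u) \<union> (V - (cnbhd E u \<union> cnbhd E v)) \<and>
      covered M \<inter> (nbhd E v - cnbhd E u) \<noteq> {})"
  shows "card {M \<in> MIM E. covered M \<inter> K = {}} + (card X + card Y) * cross_count
    + ((card X + card Y) choose 2) * pair_count \<le> card (MIM F)"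
proof -
  have "{M \<in> MIM E. covered M \<inter> K = {}} \<subseteq> {M \<in> MIM F. covered M \<inter> K = {}}"
    using maximal_induced_matching_F_if_avoiding[OF no_v_side] unfolding MIM_def by blast
  then have "card {M \<in> MIM E. covered M \<inter> K = {}} \<le> card {M \<in> MIM F. covered M \<inter> K = {}}"
    using finite_MIM[OF graph_F] by (simp add: card_mono)
  moreover have "card K = card X + card Y"
    using finite_twins twins_disjoint by (simp add: card_Un_disjoint)
  ultimately show ?thesis
    using card_MIM_F by simp
qed

lemma card_MIM_E_le:
  obtains S where "card (MIM E) \<le> card {M \<in> MIM E. covered M \<inter> K = {}}
      + card X * cross_count + card Y * nontwin_edge.cross_count V E v u
      + (card X choose 2) * pair_count + (card Y choose 2) * nontwin_edge.pair_count V E v u + S"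
    and "S \<le> card X * card Y * pair_count"
    and "S \<le> card X * card Y * nontwin_edge.pair_count V E v u"
proof -
  interpret swap: nontwin_edge V E v u
    by (rule swapped)
  have YX: "Y \<union> X = K"
    by blast
  have "(\<Sum>k\<in>K. \<Sum>r\<in>V - K. mim_count E {k, r})
      = (\<Sum>k\<in>X. \<Sum>r\<in>V - K. mim_count E {k, r}) + (\<Sum>k\<in>Y. \<Sum>r\<in>V - K. mim_count E {k, r})"
    using finite_twins twins_disjoint by (simp add: sum.union_disjoint)
  also have "\<dots> = card X * cross_count + card Y * swap.cross_count"
    using sum_cross_X swap.sum_cross_X unfolding YX by simp
  finally have cross: "(\<Sum>k\<in>K. \<Sum>r\<in>V - K. mim_count E {k, r})
      = card X * cross_count + card Y * swap.cross_count" .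
  have "(\<Sum>e\<in>pairs_in K. mim_count E e)
      \<le> (\<Sum>e\<in>pairs_in X \<union> pairs_in Y \<union> pairs_between X Y. mim_count E e)"
    using pairs_in_Un_subset finite_twins
    by (intro sum_mono2) (simp_all add: finite_pairs_in pairs_between_def)
  also have "\<dots> \<le> (\<Sum>e\<in>pairs_in X. mim_count E e) + (\<Sum>e\<in>pairs_in Y. mim_count E e)
      + (\<Sum>e\<in>pairs_between X Y. mim_count E e)"
  proof -
    have fin: "finite (pairs_in X)" "finite (pairs_in Y)" "finite (pairs_between X Y)"
      using finite_twins by (simp_all add: finite_pairs_in pairs_between_def)
    then show ?thesis
      using sum_Un_le[OF finite_UnI[OF fin(1,2)] fin(3), of "mim_count E"]
        sum_Un_le[OF fin(1,2), of "mim_count E"] by linarith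
  qed
  finally have pairs: "(\<Sum>e\<in>pairs_in K. mim_count E e) \<le> (card X choose 2) * pair_count
      + (card Y choose 2) * swap.pair_count + (\<Sum>e\<in>pairs_between X Y. mim_count E e)"
    using sum_pairs_in_X swap.sum_pairs_in_X by simp
  show ?thesis
  proof (rule that)
    show "card (MIM E) \<le> card {M \<in> MIM E. covered M \<inter> K = {}}
      + card X * cross_count + card Y * swap.cross_count
      + (card X choose 2) * pair_count + (card Y choose 2) * swap.pair_count
      + (\<Sum>e\<in>pairs_between X Y. mim_count E e)"
      using card_MIM_clique[OF graph K_subset_V clique_E] cross pairs by simp
    show "(\<Sum>e\<in>pairs_between X Y. mim_count E e) \<le> card X * card Y * pair_count"
      by (rule sum_pairs_between_le)
    show "(\<Sum>e\<in>pairs_between X Y. mim_count E e) \<le> card X * card Y * swap.pair_count"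
      using swap.sum_pairs_between_le by (simp add: pairs_between_commute mult.commute)
  qed
qed

lemma card_MIM_swap_ge:
  assumes no_u_side: "\<not> (\<exists>M. maximal_induced_matching E M \<and>
      covered M \<subseteq> (nbhd E u - cnbhd E v) \<union> (V - (cnbhd E u \<union> cnbhd E v)) \<and>
      covered M \<inter> (nbhd E u - cnbhd E v) \<noteq> {})"
  shows "card {M \<in> MIM E. covered M \<inter> K = {}} + (card X + card Y) * nontwin_edge.cross_count V E v u
    + ((card X + card Y) choose 2) * nontwin_edge.pair_count V E v u \<le> card (MIM (make_twins E X v))"
proof -
  interpret swap: nontwin_edge V E v u
    by (rule swapped)
  have eq: "cnbhd E v \<union> cnbhd E u = cnbhd E u \<union> cnbhd E v" "Y \<union> X = K"
      "card Y + card X = card X + card Y"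
    by auto
  show ?thesis
    using swap.card_MIM_F_ge[OF no_u_side[folded eq(1)]] unfolding eq(2,3) .
qed

end

lemma double_choose_two: "2 * int (k choose 2) = int k * int k - int k"
proof -
  have "Suc k choose 2 = k + (k choose 2)" for k
    by (simp add: numeral_2_eq_2)
  then show ?thesis
    by (induction k) (simp_all add: algebra_simps)
qed

lemma weighted_count_bound:
  fixes n n1 n2 t x y c1 c2 a1 a2 s :: nat
  assumes n: "n \<le> t + x * c1 + y * c2 + (x choose 2) * a1 + (y choose 2) * a2 + s"
    and n1: "t + (x + y) * c1 + ((x + y) choose 2) * a1 \<le> n1"
    and n2: "t + (x + y) * c2 + ((x + y) choose 2) * a2 \<le> n2"
    and s: "s \<le> x * y * a1" "s \<le> x * y * a2"
  shows "x * n + y * n \<le> x * n1 + y * n2"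
proof -
  define N B1 B2 where "N = int t + int x * int c1 + int y * int c2
      + int (x choose 2) * int a1 + int (y choose 2) * int a2 + int s"
    and "B1 = int t + (int x + int y) * int c1 + int ((x + y) choose 2) * int a1"
    and "B2 = int t + (int x + int y) * int c2 + int ((x + y) choose 2) * int a2"
  have identity: "2 * (int x * B1 + int y * B2 - (int x + int y) * N)
      = (int x + int y) * (int x * int y * int a1 - int s)
        + (int x + int y) * (int x * int y * int a2 - int s)"
  proof -
    have "2 * int ((x + y) choose 2) = (int x + int y) * (int x + int y) - (int x + int y)"
      using double_choose_two[of "x + y"] by simp
    then show ?thesis
      unfolding N_def B1_def B2_def using double_choose_two[of x] double_choose_two[of y]
      by algebra
  qed
  have "0 \<le> (int x + int y) * (int x * int y * int a1 - int s)"
    "0 \<le> (int x + int y) * (int x * int y * int a2 - int s)"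
    using s by (simp_all add: zero_le_mult_iff of_nat_mult[symmetric] del: of_nat_mult)
  then have "0 \<le> 2 * (int x * B1 + int y * B2 - (int x + int y) * N)"
    unfolding identity by simp
  then have "(int x + int y) * N \<le> int x * B1 + int y * B2"
    by simp
  moreover have "int n \<le> N" "B1 \<le> int n1" "B2 \<le> int n2"
    using n n1 n2 unfolding N_def B1_def B2_def
    by (simp_all only: of_nat_add[symmetric] of_nat_mult[symmetric] of_nat_le_iff)
  moreover have "(int x + int y) * int n \<le> (int x + int y) * N"
    using \<open>int n \<le> N\<close> by (intro mult_left_mono) simp_all
  moreover have "int x * B1 \<le> int x * int n1" "int y * B2 \<le> int y * int n2"
    using \<open>B1 \<le> int n1\<close> \<open>B2 \<le> int n2\<close> by (simp_all add: mult_left_mono)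
  ultimately have "(int x + int y) * int n \<le> int x * int n1 + int y * int n2"
    by linarith
  then show ?thesis
    by (simp only: distrib_right of_nat_add[symmetric] of_nat_mult[symmetric] of_nat_le_iff)
qed

lemma averaging_bound:
  fixes n n1 n2 t x y c1 c2 a1 a2 s :: nat
  assumes "n \<le> t + x * c1 + y * c2 + (x choose 2) * a1 + (y choose 2) * a2 + s"
    and "t + (x + y) * c1 + ((x + y) choose 2) * a1 \<le> n1"
    and "t + (x + y) * c2 + ((x + y) choose 2) * a2 \<le> n2"
    and "s \<le> x * y * a1" "s \<le> x * y * a2"
    and "0 < x"
  shows "n \<le> n1 \<or> n \<le> n2"
proof (rule ccontr)
  assume "\<not> ?thesis"
  then have "x * n1 < x * n" "y * n2 \<le> y * n"
    using \<open>0 < x\<close> by simp_all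
  then show False
    using weighted_count_bound[OF assms(1-5)] by linarith
qed

lemma make_twins_of_twins:
  assumes "cnbhd E u = cnbhd E v"
  shows "make_twins E (twins V E u) v = E"
proof -
  have "nbhd E w - cnbhd E v = {}" "nbhd E v - cnbhd E w = {}" if "w \<in> twins V E u" for w
  proof -
    have "cnbhd E w = cnbhd E v"
      using that assms by (simp add: twins_iff)
    then show "nbhd E w - cnbhd E v = {}" "nbhd E v - cnbhd E w = {}"
      unfolding cnbhd_def by blast+
  qed
  then show ?thesis
    unfolding make_twins_def by blast
qed

theorem lemma2p3:
  fixes V :: "'a set" and E :: "'a set set" and u v :: 'a
  assumes "graph V E"
    and "{u, v} \<in> E"
    and "\<not> (\<exists>M. maximal_induced_matching E M \<and>
            covered M \<subseteq> (nbhd E u - cnbhd E v) \<union> (V - (cnbhd E u \<union> cnbhd E v)) \<and>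
            covered M \<inter> (nbhd E u - cnbhd E v) \<noteq> {})"
    and "\<not> (\<exists>M. maximal_induced_matching E M \<and>
            covered M \<subseteq> (nbhd E v - cnbhd E u) \<union> (V - (cnbhd E u \<union> cnbhd E v)) \<and>
            covered M \<inter> (nbhd E v - cnbhd E u) \<noteq> {})"
  shows "card (MIM (make_twins E (twins V E u) v)) \<ge> card (MIM E)
       \<or> card (MIM (make_twins E (twins V E v) u)) \<ge> card (MIM E)"
proof (cases "cnbhd E u = cnbhd E v")
  case True
  then show ?thesis
    by (simp add: make_twins_of_twins)
next
  case False
  interpret nontwin_edge V E u v
    using assms(1,2) False by unfold_locales
  obtain S where S: "card (MIM E) \<le> card {M \<in> MIM E. covered M \<inter> K = {}}
      + card X * cross_count + card Y * nontwin_edge.cross_count V E v u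
      + (card X choose 2) * pair_count + (card Y choose 2) * nontwin_edge.pair_count V E v u + S"
    "S \<le> card X * card Y * pair_count" "S \<le> card X * card Y * nontwin_edge.pair_count V E v u"
    by (rule card_MIM_E_le)
  have "0 < card X"
    using u_in_X finite_twins(1) card_gt_0_iff by blast
  then show ?thesis
    using averaging_bound[OF S(1) card_MIM_F_ge[OF assms(4)] card_MIM_swap_ge[OF assms(3)] S(2,3)]
    by auto
qed

end
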